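(* Let $D$ be a finite digraph and let $\mathcal{S}=\{S_1,\dots,S_t\}$ be a minimum dicoloring of $D$ (i.e., $t=\chi'(D)$). Then there exists a directed path $P$ of $D$ orthogonal to $\mathcal{S}$, that is, $|V(P)\cap S_i|=1$ for every $i\in\{1,\dots,t\}$.
   Context: A dicoloring of $D$ is a partition of $V(D)$ into sets $S_1,\dots,S_t$ such that each induced subdigraph $D[S_i]$ is acyclic. The dichromatic number $\chi'(D)$ is the minimum size of a dicoloring of $D$; a minimum dicoloring is a dicoloring of size $\chi'(D)$. *)

theory Defs
  imports Main
begin

definition digraph :: "'a set \<Rightarrow> ('a \<times> 'a) set \<Rightarrow> bool" where
  "digraph V A \<longleftrightarrow> A \<subseteq> V \<times> V"

definition dicoloring :: "'a set \<Rightarrow> ('a \<times> 'a) set \<Rightarrow> 'a set set \<Rightarrow> bool" where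
  "dicoloring V A \<S> \<longleftrightarrow>
     \<Union>\<S> = V \<and> {} \<notin> \<S> \<and>
     (\<forall>S\<in>\<S>. \<forall>S'\<in>\<S>. S \<noteq> S' \<longrightarrow> S \<inter> S' = {}) \<and>
     (\<forall>S\<in>\<S>. acyclic (A \<inter> (S \<times> S)))"

definition dichromatic_number :: "'a set \<Rightarrow> ('a \<times> 'a) set \<Rightarrow> nat" where
  "dichromatic_number V A = (LEAST t. \<exists>\<S>. dicoloring V A \<S> \<and> finite \<S> \<and> card \<S> = t)"

definition min_dicoloring :: "'a set \<Rightarrow> ('a \<times> 'a) set \<Rightarrow> 'a set set \<Rightarrow> bool" where
  "min_dicoloring V A \<S> \<longleftrightarrow>
     dicoloring V A \<S> \<and> finite \<S> \<and> card \<S> = dichromatic_number V A"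

definition dipath :: "'a set \<Rightarrow> ('a \<times> 'a) set \<Rightarrow> 'a list \<Rightarrow> bool" where
  "dipath V A p \<longleftrightarrow> p \<noteq> [] \<and> distinct p \<and> set p \<subseteq> V \<and>
     (\<forall>i. Suc i < length p \<longrightarrow> (p ! i, p ! Suc i) \<in> A)"

definition orthogonal :: "'a list \<Rightarrow> 'a set set \<Rightarrow> bool" where
  "orthogonal p \<S> \<longleftrightarrow> (\<forall>S\<in>\<S>. card (set p \<inter> S) = 1)"

end

theory Submission
  imports Defs
begin

text \<open>Number the colour classes \<open>S\<^sub>0, \<dots>, S\<^sub>t\<^sub>-\<^sub>1\<close> and let \<open>R\<^sub>i \<subseteq> S\<^sub>i\<close> be the set of
  endpoints of the paths \<open>v\<^sub>0 \<dots> v\<^sub>i\<close> with \<open>v\<^sub>j \<in> S\<^sub>j\<close>. If \<open>R\<^sub>t\<^sub>-\<^sub>1 \<noteq> {}\<close>, such a path meets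
  every class exactly once. Otherwise move every vertex of \<open>S\<^sub>i - R\<^sub>i\<close> to colour \<open>i - 1\<close>
  (note \<open>R\<^sub>0 = S\<^sub>0\<close>). The new class \<open>i\<close> is \<open>R\<^sub>i \<union> (S\<^sub>i\<^sub>+\<^sub>1 - R\<^sub>i\<^sub>+\<^sub>1)\<close>; there is no arc from
  \<open>R\<^sub>i\<close> to \<open>S\<^sub>i\<^sub>+\<^sub>1 - R\<^sub>i\<^sub>+\<^sub>1\<close>, so every cycle in it would stay inside one of the two
  acyclic parts. Colour \<open>t - 1\<close> is now unused, contradicting minimality.\<close>

lemma acyclic_Restr_Un:
  assumes acyc_R: "acyclic (Restr r R)" and acyc_X: "acyclic (Restr r X)"
    and no_RX: "r \<inter> (R \<times> X) = {}"
  shows "acyclic (Restr r (R \<union> X))"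
proof -
  let ?s = "Restr r (R \<union> X)"
  have stay_R: "y \<in> R \<and> (x, y) \<in> (Restr r R)\<^sup>+" if "(x, y) \<in> ?s\<^sup>+" "x \<in> R" for x y
    using that
  proof (induction rule: trancl_induct)
    case (base y)
    then show ?case using no_RX by blast
  next
    case (step y z)
    then have "(y, z) \<in> Restr r R" using no_RX by blast
    then show ?case using step by (blast intro: trancl_into_trancl)
  qed
  have avoid_R: "(x, y) \<in> (Restr r X)\<^sup>+" if "(x, y) \<in> ?s\<^sup>+" "y \<notin> R" for x y
    using that
  proof (induction rule: trancl_induct)
    case (base y)
    then show ?case using no_RX by blast
  next
    case (step y z)
    then have "y \<notin> R" "(y, z) \<in> Restr r X" using no_RX by blast+
    then show ?case using step by (blast intro: trancl_into_trancl)
  qed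
  show ?thesis
    unfolding acyclic_def
  proof
    fix x
    show "(x, x) \<notin> ?s\<^sup>+"
    proof
      assume "(x, x) \<in> ?s\<^sup>+"
      then show False
        using stay_R avoid_R acyc_R acyc_X unfolding acyclic_def by blast
    qed
  qed
qed

definition colour_class :: "'a set \<Rightarrow> ('a \<Rightarrow> nat) \<Rightarrow> nat \<Rightarrow> 'a set" where
  "colour_class V c i = {x \<in> V. c x = i}"

lemma dichromatic_number_le_colours:
  assumes range: "\<forall>x\<in>V. c x < k"
    and acyc: "\<forall>i<k. acyclic (Restr A (colour_class V c i))"
  shows "dichromatic_number V A \<le> k"
proof -
  define \<T> where "\<T> = colour_class V c ` {..<k} - {{}}"
  have "\<Union>\<T> = V"
    using range unfolding \<T>_def colour_class_def by blast
  moreover have "S \<inter> S' = {}" if "S \<in> \<T>" "S' \<in> \<T>" "S \<noteq> S'" for S S'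
    using that unfolding \<T>_def colour_class_def by auto
  moreover have "acyclic (Restr A S)" if "S \<in> \<T>" for S
    using that acyc unfolding \<T>_def by blast
  ultimately have "dicoloring V A \<T>"
    unfolding dicoloring_def \<T>_def by blast
  moreover have "finite \<T>" unfolding \<T>_def by simp
  moreover have "card \<T> \<le> k"
  proof -
    have "card \<T> \<le> card (colour_class V c ` {..<k})"
      unfolding \<T>_def by (rule card_mono) auto
    also have "\<dots> \<le> k"
      using card_image_le[of "{..<k}" "colour_class V c"] by simp
    finally show ?thesis .
  qed
  ultimately show ?thesis
    unfolding dichromatic_number_def by (blast intro: Least_le le_trans)
qed

lemma dicoloring_colour_function:
  assumes "dicoloring V A \<S>" and "finite \<S>"
  obtains c where "\<forall>x\<in>V. c x < card \<S>" and "\<S> = colour_class V c ` {..<card \<S>}"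
proof -
  define n where "n = card \<S>"
  obtain h where h: "bij_betw h {..<n} \<S>"
    using ex_bij_betw_nat_finite[OF \<open>finite \<S>\<close>] unfolding atLeast0LessThan n_def by blast
  have cover: "\<Union>\<S> = V" and disj: "\<forall>S\<in>\<S>. \<forall>S'\<in>\<S>. S \<noteq> S' \<longrightarrow> S \<inter> S' = {}"
    using assms(1) unfolding dicoloring_def by auto
  have S_eq: "\<S> = h ` {..<n}"
    using h unfolding bij_betw_def by simp
  have unique: "i = j" if "i < n" "j < n" "x \<in> h i" "x \<in> h j" for i j x
  proof -
    have "h i \<in> \<S>" "h j \<in> \<S>" using that S_eq by auto
    then have "h i = h j" using disj that by blast
    then show ?thesis using h that unfolding bij_betw_def inj_on_def by auto
  qed
  define c where "c x = (LEAST i. x \<in> h i)" for x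
  have c_eq: "c x = i" if "i < n" "x \<in> h i" for i x
    unfolding c_def
  proof (rule Least_equality)
    show "x \<in> h i" by fact
    show "i \<le> j" if "x \<in> h j" for j
      using unique[of j i x] \<open>i < n\<close> \<open>x \<in> h i\<close> that by (cases "j < i") auto
  qed
  have home: "\<exists>i<n. x \<in> h i" if "x \<in> V" for x
    using that cover unfolding S_eq by auto
  have h_sub: "h i \<subseteq> V" if "i < n" for i
    using that cover unfolding S_eq by auto
  have range: "\<forall>x\<in>V. c x < n" using home c_eq by blast
  have class_eq: "colour_class V c i = h i" if "i < n" for i
  proof -
    have "x \<in> h i" if "x \<in> V" "c x = i" for x
      using home[OF \<open>x \<in> V\<close>] c_eq that by auto
    then show ?thesis using \<open>i < n\<close> h_sub c_eq unfolding colour_class_def by auto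
  qed
  have "\<S> = colour_class V c ` {..<n}"
    unfolding S_eq by (rule image_cong) (simp_all add: class_eq)
  with range show ?thesis using that unfolding n_def by blast
qed

fun layered_reach :: "(nat \<Rightarrow> 'a set) \<Rightarrow> ('a \<times> 'a) set \<Rightarrow> nat \<Rightarrow> 'a set" where
  "layered_reach F A 0 = F 0"
| "layered_reach F A (Suc i) = {v \<in> F (Suc i). \<exists>u \<in> layered_reach F A i. (u, v) \<in> A}"

lemma layered_reach_subset: "layered_reach F A i \<subseteq> F i"
  by (cases i) auto

lemma layered_reach_path:
  assumes "v \<in> layered_reach F A i"
  shows "\<exists>p. length p = Suc i \<and> p ! i = v \<and> (\<forall>j<length p. p ! j \<in> F j)
     \<and> (\<forall>j. Suc j < length p \<longrightarrow> (p ! j, p ! Suc j) \<in> A)"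
  using assms
proof (induction i arbitrary: v)
  case 0
  then show ?case by (intro exI[of _ "[v]"]) auto
next
  case (Suc i)
  then obtain u where u: "u \<in> layered_reach F A i" "(u, v) \<in> A" "v \<in> F (Suc i)" by auto
  from Suc.IH[OF u(1)] obtain p where p: "length p = Suc i" "p ! i = u"
    "\<forall>j<length p. p ! j \<in> F j" "\<forall>j. Suc j < length p \<longrightarrow> (p ! j, p ! Suc j) \<in> A"
    by blast
  have "\<forall>j<length (p @ [v]). (p @ [v]) ! j \<in> F j"
    using p u by (auto simp: nth_append less_Suc_eq)
  moreover have "\<forall>j. Suc j < length (p @ [v]) \<longrightarrow> ((p @ [v]) ! j, (p @ [v]) ! Suc j) \<in> A"
    using p u by (auto simp: nth_append less_Suc_eq)
  ultimately show ?case using p by (intro exI[of _ "p @ [v]"]) (simp add: nth_append)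
qed

lemma dichromatic_number_le_if_layered_reach_empty:
  fixes V :: "'a set" and A :: "('a \<times> 'a) set" and c :: "'a \<Rightarrow> nat"
  defines "R \<equiv> layered_reach (colour_class V c) A"
  assumes range: "\<forall>x\<in>V. c x < t"
    and acyc: "\<forall>i<t. acyclic (Restr A (colour_class V c i))"
    and empty: "R (t - 1) = {}"
  shows "dichromatic_number V A \<le> t - 1"
proof -
  define c' where "c' x = (if x \<in> R (c x) then c x else c x - 1)" for x
  have R_class: "R i \<subseteq> colour_class V c i" for i
    unfolding R_def by (rule layered_reach_subset)
  have R_zero: "x \<in> R (c x)" if "x \<in> V" "c x = 0" for x
    using that unfolding R_def by (simp add: colour_class_def)
  have "c' x < t - 1" if "x \<in> V" for x
  proof (cases "x \<in> R (c x)")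
    case True
    then have "c x \<noteq> t - 1" using empty by auto
    then show ?thesis using range that True unfolding c'_def by auto
  next
    case False
    then have "c x \<noteq> 0" using R_zero that by blast
    then show ?thesis using range that False unfolding c'_def by auto
  qed
  moreover have "acyclic (Restr A (colour_class V c' j))" if "j < t - 1" for j
  proof -
    define X where "X = colour_class V c (Suc j) - R (Suc j)"
    have "colour_class V c' j \<subseteq> R j \<union> X"
    proof
      fix x assume x: "x \<in> colour_class V c' j"
      show "x \<in> R j \<union> X"
      proof (cases "x \<in> R (c x)")
        case True
        then show ?thesis using x unfolding c'_def colour_class_def by auto
      next
        case False
        moreover have "x \<in> V" using x unfolding colour_class_def by blast
        ultimately have "c x \<noteq> 0" using R_zero by blast
        then show ?thesis using x False unfolding c'_def colour_class_def X_def by auto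
      qed
    qed
    moreover have "acyclic (Restr A (R j \<union> X))"
    proof (rule acyclic_Restr_Un)
      show "acyclic (Restr A (R j))"
        by (rule acyclic_subset[OF acyc[rule_format, of j]]) (use that R_class in auto)
      show "acyclic (Restr A X)"
        by (rule acyclic_subset[OF acyc[rule_format, of "Suc j"]]) (use that in \<open>auto simp: X_def\<close>)
      show "A \<inter> (R j \<times> X) = {}"
        unfolding X_def R_def by auto
    qed
    ultimately show ?thesis by (blast intro: acyclic_subset)
  qed
  ultimately show ?thesis by (intro dichromatic_number_le_colours) auto
qed

lemma rainbow_path_orthogonal:
  assumes "p \<noteq> []"
    and rainbow: "\<forall>j<length p. p ! j \<in> colour_class V c j"
    and arcs: "\<forall>j. Suc j < length p \<longrightarrow> (p ! j, p ! Suc j) \<in> A"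
  shows "dipath V A p" and "\<forall>i<length p. card (set p \<inter> colour_class V c i) = 1"
proof -
  have colour: "c (p ! j) = j" "p ! j \<in> V" if "j < length p" for j
    using rainbow that unfolding colour_class_def by auto
  have "distinct p"
    unfolding distinct_conv_nth
  proof (intro allI impI)
    fix i j assume "i < length p" "j < length p" "i \<noteq> j"
    then show "p ! i \<noteq> p ! j" using colour(1) by metis
  qed
  then show "dipath V A p"
    unfolding dipath_def using assms colour by (auto simp: in_set_conv_nth)
  have "set p \<inter> colour_class V c i = {p ! i}" if "i < length p" for i
    using that colour unfolding colour_class_def by (auto simp: in_set_conv_nth)
  then show "\<forall>i<length p. card (set p \<inter> colour_class V c i) = 1" by simp
qed

theorem mainTheorem2:
  fixes V :: "'a set" and A :: "('a \<times> 'a) set" and \<S> :: "'a set set"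
  assumes "finite V" and "V \<noteq> {}" and "digraph V A"
    and "min_dicoloring V A \<S>"
  shows "\<exists>P. dipath V A P \<and> orthogonal P \<S>"
proof -
  define t where "t = card \<S>"
  have dicol: "dicoloring V A \<S>" and "finite \<S>" and min: "t = dichromatic_number V A"
    using assms(4) unfolding min_dicoloring_def t_def by auto
  obtain c where range: "\<forall>x\<in>V. c x < t" and classes: "\<S> = colour_class V c ` {..<t}"
    by (rule dicoloring_colour_function[OF dicol \<open>finite \<S>\<close>, folded t_def])
  have acyc: "\<forall>i<t. acyclic (Restr A (colour_class V c i))"
    using dicol classes unfolding dicoloring_def by auto
  have "t > 0" using range \<open>V \<noteq> {}\<close> by fastforce
  have "layered_reach (colour_class V c) A (t - 1) \<noteq> {}"
  proof
    assume "layered_reach (colour_class V c) A (t - 1) = {}"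
    with range acyc have "dichromatic_number V A \<le> t - 1"
      by (rule dichromatic_number_le_if_layered_reach_empty)
    with min \<open>t > 0\<close> show False by simp
  qed
  then obtain v where "v \<in> layered_reach (colour_class V c) A (t - 1)" by blast
  from layered_reach_path[OF this] obtain p where "length p = t"
    and "\<forall>j<length p. p ! j \<in> colour_class V c j"
    and "\<forall>j. Suc j < length p \<longrightarrow> (p ! j, p ! Suc j) \<in> A"
    using \<open>t > 0\<close> by auto
  with rainbow_path_orthogonal[of p V c A] \<open>t > 0\<close> classes show ?thesis
    unfolding orthogonal_def by auto
qed

end
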